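(* Let $G$, $H$, $K$ be impartial games with $H = K$. Then $G\circ H = G\circ K$.
   Context: All games are finite (short) impartial games under normal play. A game is identified with its set of options; $\mathbf{E}$ denotes the game with no options, and $\equiv$ denotes identity of games (same set of options, recursively). The disjunctive sum is $G+H \equiv \{g+H,\ G+h\}$. A $\mathcal{P}$-position is a game all of whose options are $\mathcal{N}$-positions; an $\mathcal{N}$-position has some option that is a $\mathcal{P}$-position. Two games are equal, $G=H$, if $G+X$ and $H+X$ have the same outcome for every game $X$; for impartial games this holds iff $G+H$ is a $\mathcal{P}$-position. (Equality is weaker than identity $\equiv$.) The split sum is defined recursively by: $G\circ H \equiv \mathbf{E}$ if $G\equiv \mathbf{E}$; $G\circ H\equiv G$ if $H\equiv\mathbf{E}$ (and $G\not\equiv\mathbf{E}$); otherwise $G\circ H \equiv \{G\circ h,\ g\circ H\}$ where $g$ ranges over the options of $G$ and $h$ over the options of $H$. *)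

theory Defs
  imports Main "HOL-Library.FSet"
begin

text \<open>Short impartial games, identified (extensionally, hereditarily) with their finite set
  of options.  Identity of games is HOL equality.\<close>

datatype game = Game (opts: "game fset")

definition E :: game where "E = Game {||}"

lemma size_opt_less: "g |\<in>| opts G \<Longrightarrow> size g < size G"
proof (cases G)
  case (Game S)
  assume a: "g |\<in>| opts G"
  have "size g < Suc (size g)" by simp
  also have "Suc (size g) \<le> (\<Sum>x\<in>fset S. Suc (size x))"
    using a Game by (intro member_le_sum[of g "fset S" "\<lambda>x. Suc (size x)", simplified]) auto
  finally show ?thesis using Game by (simp add: size_fset_simps)
qed

function gsum :: "game \<Rightarrow> game \<Rightarrow> game" where
  "gsum G H = Game ((\<lambda>g. gsum g H) |`| opts G |\<union>| (\<lambda>h. gsum G h) |`| opts H)"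
  by auto
termination
  by (relation "measure (\<lambda>(G, H). size G + size H)") (auto dest: size_opt_less)

function isP :: "game \<Rightarrow> bool" where
  "isP G = (\<forall>g. g |\<in>| opts G \<longrightarrow> \<not> isP g)"
  by auto
termination
  by (relation "measure size") (auto dest: size_opt_less)

definition isN :: "game \<Rightarrow> bool" where "isN G = (\<exists>g. g |\<in>| opts G \<and> isP g)"

definition game_eq :: "game \<Rightarrow> game \<Rightarrow> bool" where
  "game_eq G H = (\<forall>X. isP (gsum G X) = isP (gsum H X))"

function split_sum :: "game \<Rightarrow> game \<Rightarrow> game" where
  "split_sum G H =
     (if G = E then E
      else if H = E then G
      else Game ((\<lambda>h. split_sum G h) |`| opts H |\<union>| (\<lambda>g. split_sum g H) |`| opts G))"
  by auto
termination
  by (relation "measure (\<lambda>(G, H). size G + size H)") (auto dest: size_opt_less)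

end

theory Submission
  imports Defs
begin

text \<open>Equality of games is the same as the sum being a \<open>\<P>\<close>-position, since \<open>K + K\<close> is always a
  \<open>\<P>\<close>-position and adding a \<open>\<P>\<close>-position does not change outcomes.  So it suffices to show that
  \<open>H + K\<close> being a \<open>\<P>\<close>-position forces \<open>G \<circ> H + G \<circ> K\<close> to be one.  This goes by induction:
  a move \<open>G \<circ> h\<close> in the first summand is answered by copying the winning reply from \<open>h + K\<close>
  inside the split sums, and a move \<open>g \<circ> H\<close> by the mirror move \<open>g \<circ> K\<close>; moves in the second
  summand are symmetric.\<close>

declare isP.simps[simp del] gsum.simps[simp del] split_sum.simps[simp del]

lemma isP_iff: "isP G \<longleftrightarrow> (\<forall>g. g |\<in>| opts G \<longrightarrow> \<not> isP g)"
  by (rule isP.simps)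

lemma not_isP_if_isP_option: "g |\<in>| opts G \<Longrightarrow> isP g \<Longrightarrow> \<not> isP G"
  using isP_iff by blast

lemma mem_opts_gsum: "x |\<in>| opts (gsum G H) \<longleftrightarrow>
   (\<exists>g. g |\<in>| opts G \<and> x = gsum g H) \<or> (\<exists>h. h |\<in>| opts H \<and> x = gsum G h)"
  by (subst gsum.simps) auto

lemma split_sum_E_right: "split_sum G E = G"
  by (subst split_sum.simps) simp

lemma mem_opts_split_sum: "x |\<in>| opts (split_sum G H) \<longleftrightarrow> G \<noteq> E \<and>
   ((\<exists>h. h |\<in>| opts H \<and> x = split_sum G h) \<or> (\<exists>g. g |\<in>| opts G \<and> x = split_sum g H))"
  by (subst split_sum.simps) (auto simp: split_sum_E_right[unfolded E_def] E_def)

lemma gsum_commute: "gsum A B = gsum B A"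
proof (induction "size A + size B" arbitrary: A B rule: less_induct)
  case less
  have "gsum a B = gsum B a" if "a |\<in>| opts A" for a
    using less that by (simp add: size_opt_less)
  moreover have "gsum A b = gsum b A" if "b |\<in>| opts B" for b
    using less that by (simp add: size_opt_less)
  ultimately show ?case
    by (subst (1 2) gsum.simps) (auto intro!: fimage_cong simp: sup_commute)
qed

lemma gsum_assoc: "gsum (gsum A B) C = gsum A (gsum B C)"
proof (induction "size A + size B + size C" arbitrary: A B C rule: less_induct)
  case less
  have "gsum (gsum a B) C = gsum a (gsum B C)" if "a |\<in>| opts A" for a
    using less that by (simp add: size_opt_less)
  moreover have "gsum (gsum A b) C = gsum A (gsum b C)" if "b |\<in>| opts B" for b
    using less that by (simp add: size_opt_less)
  moreover have "gsum (gsum A B) c = gsum A (gsum B c)" if "c |\<in>| opts C" for c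
    using less that by (simp add: size_opt_less)
  ultimately show ?case
    by (intro game.expand fset_eqI) (auto simp: mem_opts_gsum)
qed

lemma isP_gsum_if_isP_left: "isP A \<Longrightarrow> isP (gsum A B) \<longleftrightarrow> isP B"
proof (induction "size A + size B" arbitrary: A B rule: less_induct)
  case less
  have right_moves: "isP (gsum A b) \<longleftrightarrow> isP b" if "b |\<in>| opts B" for b
    using less that by (simp add: size_opt_less)
  have left_moves: "\<not> isP (gsum a B)" if a: "a |\<in>| opts A" and "isP B" for a
  proof -
    obtain a' where a': "a' |\<in>| opts a" "isP a'"
      using a less.prems isP_iff by blast
    have "size a' < size A"
      using a' a by (meson less_trans size_opt_less)
    then have "isP (gsum a' B)"
      using less a' \<open>isP B\<close> by simp
    then show ?thesis
      using a' by (metis not_isP_if_isP_option mem_opts_gsum)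
  qed
  show ?case
  proof
    assume "isP (gsum A B)"
    then show "isP B"
      using right_moves unfolding isP_iff[of B] by (metis not_isP_if_isP_option mem_opts_gsum)
  next
    assume "isP B"
    then show "isP (gsum A B)"
      using right_moves left_moves unfolding isP_iff[of "gsum A B"] isP_iff[of B] mem_opts_gsum
      by blast
  qed
qed

text \<open>The second player wins by copying every move into the other summand.\<close>

lemma isP_gsum_self: "isP (gsum K K)"
proof (induction "size K" arbitrary: K rule: less_induct)
  case less
  have "isP (gsum k k)" if "k |\<in>| opts K" for k
    using less that by (simp add: size_opt_less)
  then show ?case
    unfolding isP_iff[of "gsum K K"] mem_opts_gsum
    by (metis not_isP_if_isP_option mem_opts_gsum)
qed

lemma game_eq_iff_isP_gsum: "game_eq H K \<longleftrightarrow> isP (gsum H K)"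
proof
  assume "game_eq H K"
  then show "isP (gsum H K)"
    using isP_gsum_self unfolding game_eq_def by blast
next
  assume HK: "isP (gsum H K)"
  have "isP (gsum H X) \<longleftrightarrow> isP (gsum K X)" for X
  proof -
    have "isP (gsum K X) \<longleftrightarrow> isP (gsum (gsum H K) (gsum K X))"
      using isP_gsum_if_isP_left[OF HK] by simp
    also have "gsum (gsum H K) (gsum K X) = gsum (gsum K K) (gsum H X)"
      by (metis gsum_assoc gsum_commute)
    also have "isP \<dots> \<longleftrightarrow> isP (gsum H X)"
      using isP_gsum_if_isP_left[OF isP_gsum_self] by simp
    finally show ?thesis by simp
  qed
  then show "game_eq H K"
    unfolding game_eq_def by blast
qed

lemma isP_gsum_split_sum:
  "isP (gsum H K) \<Longrightarrow> isP (gsum (split_sum G H) (split_sum G K))"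
proof (induction "size G + size H + size K" arbitrary: G H K rule: less_induct)
  case less
  have IH: "isP (gsum (split_sum G' H') (split_sum G' K'))"
    if "isP (gsum H' K')" "size G' + size H' + size K' < size G + size H + size K" for G' H' K'
    using less.hyps that by blast
  have first_summand: "\<not> isP (gsum y (split_sum G K'))"
    if y: "y |\<in>| opts (split_sum G H')" and HK': "isP (gsum H' K')"
      and size: "size H' + size K' = size H + size K" for y H' K'
  proof -
    have "G \<noteq> E"
      using y by (simp add: mem_opts_split_sum)
    then have opt_G: "split_sum G k |\<in>| opts (split_sum G K)" if "k |\<in>| opts K" for k K
      using that by (auto simp: mem_opts_split_sum)
    from y consider (h) h where "h |\<in>| opts H'" "y = split_sum G h"
      | (g) g where "g |\<in>| opts G" "y = split_sum g H'"
      by (auto simp: mem_opts_split_sum)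
    then show ?thesis
    proof cases
      case g
      have "size g < size G"
        using g size_opt_less by blast
      then have "isP (gsum (split_sum g H') (split_sum g K'))"
        using IH HK' size by simp
      moreover have "split_sum g K' |\<in>| opts (split_sum G K')"
        using g \<open>G \<noteq> E\<close> by (auto simp: mem_opts_split_sum)
      ultimately show ?thesis
        using g by (metis not_isP_if_isP_option mem_opts_gsum)
    next
      case h
      have "\<not> isP (gsum h K')"
        using HK' h by (metis isP_iff mem_opts_gsum)
      then obtain z where "z |\<in>| opts (gsum h K')" "isP z"
        using isP_iff by blast
      then consider (h') h' where "h' |\<in>| opts h" "isP (gsum h' K')"
        | (k) k where "k |\<in>| opts K'" "isP (gsum h k)"
        by (auto simp: mem_opts_gsum)
      then show ?thesis
      proof cases
        case h'
        have "size h' < size H'"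
          using h h' by (meson less_trans size_opt_less)
        then have "isP (gsum (split_sum G h') (split_sum G K'))"
          using IH h' size by simp
        then show ?thesis
          using h h' opt_G by (metis not_isP_if_isP_option mem_opts_gsum)
      next
        case k
        have "size h < size H'" "size k < size K'"
          using h k size_opt_less by blast+
        then have "isP (gsum (split_sum G h) (split_sum G k))"
          using IH k size by simp
        then show ?thesis
          using h k opt_G by (metis not_isP_if_isP_option mem_opts_gsum)
      qed
    qed
  qed
  have "isP (gsum K H)"
    using less.prems by (simp add: gsum_commute)
  then have "\<not> isP (gsum (split_sum G H) y)" if "y |\<in>| opts (split_sum G K)" for y
    using first_summand[OF that] by (simp add: gsum_commute)
  then show ?case
    unfolding isP_iff[of "gsum (split_sum G H) (split_sum G K)"] mem_opts_gsum
    using first_summand[OF _ less.prems refl] by blast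
qed

theorem theorem2p5:
  fixes G H K :: game
  assumes "game_eq H K"
  shows "game_eq (split_sum G H) (split_sum G K)"
  using assms isP_gsum_split_sum by (simp add: game_eq_iff_isP_gsum)

end
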